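(* Let $n,m\ge1$ be integers (not necessarily distinct). Then for the Ramsey number $\mathcal{R}_{\mathcal{II}}$ with respect to the class $\mathcal{II}$ of inclusion ideal graphs, \[ \mathcal{R}_{\mathcal{II}}(n,m)=\mathcal{R}_{\mathcal{PO}}(n,m)=(n-1)(m-1)+1 . \]
   Context: For a ring $R$ (with $1\ne0$, not necessarily commutative), a left ideal $I$ is non-trivial if $I\ne\{0\}$ and $I\ne R$. The inclusion ideal graph $\mathrm{In}(R)$ is the simple undirected graph whose vertices are the non-trivial left ideals of $R$, distinct $I,J$ adjacent iff $I\subset J$ or $J\subset I$; $\mathcal{II}$ is the class of all inclusion ideal graphs. $\mathcal{PO}$ is the class of partial order graphs $G_A$ of posets $(A,\le)$ (vertex set $A$, distinct $a,b$ adjacent iff $a\le b$ or $b\le a$). For a class $\mathcal{C}$ of graphs, $\mathcal{R}_{\mathcal{C}}(n,m)$ is the minimal $r$ such that every induced subgraph with $r$ vertices of any graph in $\mathcal{C}$ contains either $K_n$ or an independent set of $m$ vertices. *)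

theory Defs
  imports "HOL-Algebra.Ring" "HOL-Algebra.AbelCoset"
begin

definition is_clique :: "('v \<Rightarrow> 'v \<Rightarrow> bool) \<Rightarrow> 'v set \<Rightarrow> bool" where
  "is_clique adj K \<longleftrightarrow> (\<forall>x\<in>K. \<forall>y\<in>K. x \<noteq> y \<longrightarrow> adj x y)"

definition is_indep :: "('v \<Rightarrow> 'v \<Rightarrow> bool) \<Rightarrow> 'v set \<Rightarrow> bool" where
  "is_indep adj I \<longleftrightarrow> (\<forall>x\<in>I. \<forall>y\<in>I. x \<noteq> y \<longrightarrow> \<not> adj x y)"

definition ramsey_prop :: "'v set \<Rightarrow> ('v \<Rightarrow> 'v \<Rightarrow> bool) \<Rightarrow> nat \<Rightarrow> nat \<Rightarrow> nat \<Rightarrow> bool" where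
  "ramsey_prop V adj n m r \<longleftrightarrow>
     (\<forall>S. S \<subseteq> V \<and> finite S \<and> card S = r \<longrightarrow>
        (\<exists>K\<subseteq>S. card K = n \<and> is_clique adj K) \<or> (\<exists>I\<subseteq>S. card I = m \<and> is_indep adj I))"

definition left_ideal :: "'a set \<Rightarrow> ('a, 'b) ring_scheme \<Rightarrow> bool" where
  "left_ideal I R \<longleftrightarrow> additive_subgroup I R \<and>
     (\<forall>a\<in>carrier R. \<forall>x\<in>I. a \<otimes>\<^bsub>R\<^esub> x \<in> I)"

definition nontriv_left_ideals :: "('a, 'b) ring_scheme \<Rightarrow> 'a set set" where
  "nontriv_left_ideals R = {I. left_ideal I R \<and> I \<noteq> {\<zero>\<^bsub>R\<^esub>} \<and> I \<noteq> carrier R}"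

definition incl_adj :: "'a set \<Rightarrow> 'a set \<Rightarrow> bool" where
  "incl_adj I J \<longleftrightarrow> I \<subset> J \<or> J \<subset> I"

definition II_ramsey :: "('a, 'b) ring_scheme \<Rightarrow> nat \<Rightarrow> nat \<Rightarrow> nat \<Rightarrow> bool" where
  "II_ramsey R n m r = ramsey_prop (nontriv_left_ideals R) incl_adj n m r"

definition po_adj :: "'a rel \<Rightarrow> 'a \<Rightarrow> 'a \<Rightarrow> bool" where
  "po_adj Le a b \<longleftrightarrow> (a, b) \<in> Le \<or> (b, a) \<in> Le"

definition PO_ramsey :: "'a set \<Rightarrow> 'a rel \<Rightarrow> nat \<Rightarrow> nat \<Rightarrow> nat \<Rightarrow> bool" where
  "PO_ramsey A Le n m r = ramsey_prop A (po_adj Le) n m r"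

end

theory Submission
  imports Defs "HOL-Algebra.IntRing" "HOL-Library.Nat_Bijection"
begin

text \<open>Both kinds of graph are comparability graphs of strict partial orders (for In(R) the
  order is strict inclusion of left ideals, in any ring). Mirsky's theorem, proved by repeatedly
  removing the antichain of minimal elements, says that a finite poset with more than
  (n - 1)(m - 1) elements has a chain of n elements or an antichain of m elements; this is the
  upper bound. It is sharp because m - 1 pairwise incomparable chains of n - 1 elements contain
  neither. Such chains are realised in \<open>\<int>\<close> by the ideals (p_i ^ j), 1 \<le> j \<le> n - 1, for m - 1
  distinct primes p_i, and in \<open>\<nat>\<close> by transporting a disjoint union of chains along
  Cantor pairing.\<close>

definition minimal_elements :: "'a set \<Rightarrow> ('a \<Rightarrow> 'a \<Rightarrow> bool) \<Rightarrow> 'a set" where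
  "minimal_elements S lt = {x \<in> S. \<forall>y\<in>S. \<not> lt y x}"

lemma exists_minimal_element_below:
  assumes "finite S" "asymp_on S lt" "transp_on S lt" "x \<in> S"
  obtains z where "z \<in> minimal_elements S lt" "z = x \<or> lt z x"
proof -
  obtain z where z: "z \<in> S" "z = x \<or> lt z x" and below: "\<forall>y\<in>S. lt y z \<longrightarrow> \<not> (y = x \<or> lt y x)"
    using Finite_Set.bex_min_element_with_property[OF assms(1-3), of "\<lambda>y. y = x \<or> lt y x"]
      assms(4) by blast
  have "\<not> lt y z" if "y \<in> S" for y
    using below z that assms(3,4) by (metis transp_onD)
  with z show thesis
    by (intro that) (auto simp: minimal_elements_def)
qed

lemma is_indep_minimal_elements:
  assumes "\<And>x y. x \<in> S \<Longrightarrow> y \<in> S \<Longrightarrow> x \<noteq> y \<Longrightarrow> adj x y \<longleftrightarrow> lt x y \<or> lt y x"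
  shows "is_indep adj (minimal_elements S lt)"
  using assms unfolding is_indep_def minimal_elements_def by blast

lemma chain_extends_by_minimal_element:
  assumes fin: "finite S" and asym: "asymp_on S lt" and trans: "transp_on S lt"
    and adj: "\<And>x y. x \<in> S \<Longrightarrow> y \<in> S \<Longrightarrow> x \<noteq> y \<Longrightarrow> adj x y \<longleftrightarrow> lt x y \<or> lt y x"
    and K: "K \<subseteq> S - minimal_elements S lt" "K \<noteq> {}" "is_clique adj K"
  obtains z where "z \<in> minimal_elements S lt" "is_clique adj (insert z K)"
proof -
  have KS: "K \<subseteq> S" using K(1) by blast
  obtain x where "x \<in> K" using K(2) by blast
  then obtain c where c: "c \<in> minimal_elements K lt"
    using exists_minimal_element_below[of K lt x] fin KS asym trans
    by (meson asymp_on_subset finite_subset transp_on_subset)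
  then have "c \<in> S" "c \<notin> minimal_elements S lt" using K(1) by (auto simp: minimal_elements_def)
  then obtain y where y: "y \<in> S" "lt y c" by (auto simp: minimal_elements_def)
  obtain z where z: "z \<in> minimal_elements S lt" "z = y \<or> lt z y"
    using exists_minimal_element_below[OF fin asym trans y(1)] .
  have zS: "z \<in> S" and zK: "z \<notin> K" using z(1) K(1) by (auto simp: minimal_elements_def)
  have "lt z c" using z y \<open>c \<in> S\<close> zS trans by (metis transp_onD)
  have "lt z w" if "w \<in> K" for w
  proof (cases "w = c")
    case False
    with c that K(3) have "adj c w" "\<not> lt w c"
      by (auto simp: is_clique_def minimal_elements_def)
    with adj[of c w] c that KS False have "lt c w"
      by (auto simp: minimal_elements_def)
    with \<open>lt z c\<close> show ?thesis using zS \<open>c \<in> S\<close> that KS trans by (metis subsetD transp_onD)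
  qed (use \<open>lt z c\<close> in simp)
  then have "adj z w \<and> adj w z" if "w \<in> K" for w
    using adj[of z w] adj[of w z] zS zK that KS by auto
  with K(3) have "is_clique adj (insert z K)" by (auto simp: is_clique_def)
  with z(1) show thesis by (rule that)
qed

lemma mirsky_chain_or_antichain:
  assumes "finite S" "asymp_on S lt" "transp_on S lt"
    and adj: "\<And>x y. x \<in> S \<Longrightarrow> y \<in> S \<Longrightarrow> x \<noteq> y \<Longrightarrow> adj x y \<longleftrightarrow> lt x y \<or> lt y x"
    and "k * (m - 1) + 1 \<le> card S"
  shows "(\<exists>K\<subseteq>S. card K = Suc k \<and> is_clique adj K) \<or> (\<exists>I\<subseteq>S. card I = m \<and> is_indep adj I)"
  using assms
proof (induction k arbitrary: S)
  case 0
  then obtain x where "x \<in> S" by fastforce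
  then show ?case by (intro disjI1 exI[of _ "{x}"]) (auto simp: is_clique_def)
next
  case (Suc k)
  define M where "M = minimal_elements S lt"
  have MS: "M \<subseteq> S" by (auto simp: M_def minimal_elements_def)
  have M_indep: "is_indep adj M"
    unfolding M_def by (rule is_indep_minimal_elements) (rule Suc.prems(4))
  show ?case
  proof (cases "m \<le> card M")
    case True
    then obtain I where "I \<subseteq> M" "card I = m" by (meson obtain_subset_with_card_n)
    then have "is_indep adj I" using M_indep by (auto simp: is_indep_def)
    with \<open>I \<subseteq> M\<close> \<open>card I = m\<close> MS show ?thesis by blast
  next
    case False
    have "card (S - M) = card S - card M"
      using MS Suc.prems(1) by (meson card_Diff_subset finite_subset)
    with False Suc.prems(5) have "k * (m - 1) + 1 \<le> card (S - M)" by simp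
    then have "(\<exists>K\<subseteq>S - M. card K = Suc k \<and> is_clique adj K) \<or> (\<exists>I\<subseteq>S - M. card I = m \<and> is_indep adj I)"
      using Suc.prems(1-4) by (intro Suc.IH) (auto intro: asymp_on_subset transp_on_subset)
    then show ?thesis
    proof (elim disjE exE conjE)
      fix K assume K: "K \<subseteq> S - M" "card K = Suc k" "is_clique adj K"
      then have "K \<noteq> {}" "finite K" by (auto simp: card_ge_0_finite)
      obtain z where "z \<in> M" "is_clique adj (insert z K)"
        using chain_extends_by_minimal_element[OF Suc.prems(1-4)] K \<open>K \<noteq> {}\<close>
        unfolding M_def by blast
      moreover have "z \<notin> K" using \<open>z \<in> M\<close> K(1) by blast
      then have "card (insert z K) = Suc (Suc k)" using K(2) \<open>finite K\<close> by simp
      moreover have "insert z K \<subseteq> S" using \<open>z \<in> M\<close> K(1) MS by blast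
      ultimately show ?thesis by blast
    next
      fix I assume "I \<subseteq> S - M" "card I = m" "is_indep adj I"
      then show ?thesis by blast
    qed
  qed
qed

lemma ramsey_prop_comparability_graph:
  assumes "asymp_on V lt" "transp_on V lt"
    and adj: "\<And>x y. x \<in> V \<Longrightarrow> y \<in> V \<Longrightarrow> x \<noteq> y \<Longrightarrow> adj x y \<longleftrightarrow> lt x y \<or> lt y x"
    and "n \<ge> 1"
  shows "ramsey_prop V adj n m ((n - 1) * (m - 1) + 1)"
  unfolding ramsey_prop_def
proof (intro allI impI)
  fix S assume S: "S \<subseteq> V \<and> finite S \<and> card S = (n - 1) * (m - 1) + 1"
  then have "(\<exists>K\<subseteq>S. card K = Suc (n - 1) \<and> is_clique adj K) \<or> (\<exists>I\<subseteq>S. card I = m \<and> is_indep adj I)"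
    using assms(1,2) adj
    by (intro mirsky_chain_or_antichain[where lt = lt]) (auto intro: asymp_on_subset transp_on_subset)
  with \<open>n \<ge> 1\<close> show "(\<exists>K\<subseteq>S. card K = n \<and> is_clique adj K) \<or> (\<exists>I\<subseteq>S. card I = m \<and> is_indep adj I)"
    by simp
qed

lemma II_ramsey_upper_bound:
  assumes "n \<ge> 1"
  shows "II_ramsey R n m ((n - 1) * (m - 1) + 1)"
  unfolding II_ramsey_def
  by (rule ramsey_prop_comparability_graph[where lt = "(\<subset>)"])
    (use assms in \<open>auto simp: incl_adj_def intro: asymp_onI transp_onI\<close>)

lemma PO_ramsey_upper_bound:
  assumes "partial_order_on A Le" "n \<ge> 1"
  shows "PO_ramsey A Le n m ((n - 1) * (m - 1) + 1)"
proof -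
  have "trans Le" "antisym Le" using assms(1) by (auto simp: partial_order_on_def preorder_on_def)
  then have "transp (\<lambda>x y. (x, y) \<in> Le \<and> x \<noteq> y)" "asymp (\<lambda>x y. (x, y) \<in> Le \<and> x \<noteq> y)"
    by (auto intro!: transpI asympI dest: transD antisymD)
  then show ?thesis
    unfolding PO_ramsey_def
    by (intro ramsey_prop_comparability_graph[where lt = "\<lambda>x y. (x, y) \<in> Le \<and> x \<noteq> y"])
      (use assms(2) in \<open>auto simp: po_adj_def intro: transp_on_subset asymp_on_subset\<close>)
qed

lemma ramsey_prop_induced_subgraph:
  assumes R: "ramsey_prop V adj n m r" and inj: "inj_on g W" and "g ` W \<subseteq> V"
    and adj: "\<And>x y. x \<in> W \<Longrightarrow> y \<in> W \<Longrightarrow> x \<noteq> y \<Longrightarrow> adj (g x) (g y) \<longleftrightarrow> adj' x y"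
  shows "ramsey_prop W adj' n m r"
  unfolding ramsey_prop_def
proof (intro allI impI)
  fix S assume S: "S \<subseteq> W \<and> finite S \<and> card S = r"
  have inj_S: "inj_on g K" if "K \<subseteq> S" for K
    using inj S that by (meson inj_on_subset subset_trans)
  have clique_iff: "is_clique adj (g ` K) \<longleftrightarrow> is_clique adj' K"
    and indep_iff: "is_indep adj (g ` K) \<longleftrightarrow> is_indep adj' K" if "K \<subseteq> S" for K
  proof -
    have "g x \<noteq> g y \<longleftrightarrow> x \<noteq> y" "x \<noteq> y \<Longrightarrow> adj (g x) (g y) \<longleftrightarrow> adj' x y"
      if "x \<in> K" "y \<in> K" for x y
      using inj_S[OF \<open>K \<subseteq> S\<close>] adj[of x y] that \<open>K \<subseteq> S\<close> S by (auto dest: inj_onD)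
    then show "is_clique adj (g ` K) \<longleftrightarrow> is_clique adj' K" "is_indep adj (g ` K) \<longleftrightarrow> is_indep adj' K"
      unfolding is_clique_def is_indep_def by auto
  qed
  have "g ` S \<subseteq> V \<and> finite (g ` S) \<and> card (g ` S) = r"
    using S assms(3) card_image[OF inj_S[of S]] by auto
  with R have "(\<exists>K\<subseteq>g ` S. card K = n \<and> is_clique adj K) \<or> (\<exists>I\<subseteq>g ` S. card I = m \<and> is_indep adj I)"
    unfolding ramsey_prop_def by blast
  then show "(\<exists>K\<subseteq>S. card K = n \<and> is_clique adj' K) \<or> (\<exists>I\<subseteq>S. card I = m \<and> is_indep adj' I)"
  proof (elim disjE exE conjE)
    fix K assume "K \<subseteq> g ` S" "card K = n" "is_clique adj K"
    then obtain K0 where K0: "K0 \<subseteq> S" "K = g ` K0" by (auto simp: subset_image_iff)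
    then have "card K0 = n" "is_clique adj' K0"
      using \<open>card K = n\<close> \<open>is_clique adj K\<close> card_image[OF inj_S[OF K0(1)]] clique_iff by auto
    with K0(1) show ?thesis by blast
  next
    fix I assume "I \<subseteq> g ` S" "card I = m" "is_indep adj I"
    then obtain I0 where I0: "I0 \<subseteq> S" "I = g ` I0" by (auto simp: subset_image_iff)
    then have "card I0 = m" "is_indep adj' I0"
      using \<open>card I = m\<close> \<open>is_indep adj I\<close> card_image[OF inj_S[OF I0(1)]] indep_iff by auto
    with I0(1) show ?thesis by blast
  qed
qed

lemma not_ramsey_prop_disjoint_cliques:
  assumes "r \<le> M * N"
  shows "\<not> ramsey_prop ({..<M} \<times> {..<N}) (\<lambda>a b. fst a = fst b) (Suc N) (Suc M) r"
proof
  assume R: "ramsey_prop ({..<M} \<times> {..<N}) (\<lambda>a b. fst a = fst b) (Suc N) (Suc M) r"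
  obtain S where S: "S \<subseteq> {..<M} \<times> {..<N}" "card S = r"
    using obtain_subset_with_card_n[of r "{..<M} \<times> {..<N}"] assms by (auto simp: card_cartesian_product)
  have "finite S" using S(1) by (rule finite_subset) simp
  with S have "(\<exists>K\<subseteq>S. card K = Suc N \<and> is_clique (\<lambda>a b. fst a = fst b) K)
      \<or> (\<exists>I\<subseteq>S. card I = Suc M \<and> is_indep (\<lambda>a b. fst a = fst b) I)"
    by (intro R[unfolded ramsey_prop_def, rule_format]) simp
  then show False
  proof (elim disjE exE conjE)
    fix K assume clique: "K \<subseteq> S" "card K = Suc N" "is_clique (\<lambda>a b. fst a = fst b) K"
    then obtain a where "a \<in> K" by (auto dest!: card_eq_SucD)
    have "K \<subseteq> {fst a} \<times> {..<N}"
    proof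
      fix b assume "b \<in> K"
      with clique(3) \<open>a \<in> K\<close> have "fst b = fst a"
        unfolding is_clique_def by (cases "b = a") blast+
      moreover have "b \<in> {..<M} \<times> {..<N}" using \<open>b \<in> K\<close> clique(1) S(1) by blast
      ultimately show "b \<in> {fst a} \<times> {..<N}" by (simp add: mem_Times_iff)
    qed
    then have "card K \<le> card ({fst a} \<times> {..<N})" by (intro card_mono) simp_all
    then have "card K \<le> N" by (simp add: card_cartesian_product)
    with clique show False by simp
  next
    fix I assume indep: "I \<subseteq> S" "card I = Suc M" "is_indep (\<lambda>a b. fst a = fst b) I"
    then have "inj_on fst I" by (auto simp: is_indep_def inj_on_def)
    moreover have "fst ` I \<subseteq> {..<M}" using indep S(1) by auto
    ultimately have "card I \<le> card {..<M}" by (intro card_inj_on_le) simp_all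
    with indep show False by simp
  qed
qed

lemma not_ramsey_prop_if_embeds_disjoint_cliques:
  fixes g :: "nat \<times> nat \<Rightarrow> 'v"
  assumes "inj g" "range g \<subseteq> V" "\<And>a b. a \<noteq> b \<Longrightarrow> adj (g a) (g b) \<longleftrightarrow> fst a = fst b"
    and "r \<le> M * N"
  shows "\<not> ramsey_prop V adj (Suc N) (Suc M) r"
proof
  assume "ramsey_prop V adj (Suc N) (Suc M) r"
  then have "ramsey_prop ({..<M} \<times> {..<N}) (\<lambda>a b. fst a = fst b) (Suc N) (Suc M) r"
  proof (rule ramsey_prop_induced_subgraph)
    show "inj_on g ({..<M} \<times> {..<N})" using assms(1) by (rule inj_on_subset) simp
    show "g ` ({..<M} \<times> {..<N}) \<subseteq> V" using assms(2) by blast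
  qed (rule assms(3))
  with not_ramsey_prop_disjoint_cliques[OF assms(4)] show False by contradiction
qed

lemma prime_power_dvd_prime_power_iff:
  fixes p q :: "'a :: factorial_semiring"
  assumes "prime p" "prime q"
  shows "p ^ Suc j dvd q ^ Suc l \<longleftrightarrow> p = q \<and> j \<le> l"
proof
  assume dvd: "p ^ Suc j dvd q ^ Suc l"
  then have "p dvd q ^ Suc l" by (rule dvd_trans[rotated]) simp
  then have "p = q" using assms by (meson prime_dvd_power primes_dvd_imp_eq)
  moreover have "p \<noteq> 0" "\<not> is_unit p" using assms(1) by auto
  ultimately show "p = q \<and> j \<le> l" using dvd dvd_power_iff by fastforce
next
  assume "p = q \<and> j \<le> l"
  then show "p ^ Suc j dvd q ^ Suc l" using le_imp_power_dvd[of "Suc j" "Suc l" q] by simp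
qed

lemma left_ideal_if_ideal:
  assumes "ideal I R"
  shows "left_ideal I R"
proof -
  interpret ideal I R by (fact assms)
  show ?thesis unfolding left_ideal_def by (simp add: additive_subgroup_axioms I_l_closed)
qed

lemma int_Idl_in_nontriv_left_ideals:
  assumes "d \<noteq> 0" "\<not> is_unit d"
  shows "Idl\<^bsub>\<Z>\<^esub> {d} \<in> nontriv_left_ideals \<Z>"
proof -
  have "left_ideal (Idl\<^bsub>\<Z>\<^esub> {d}) \<Z>" by (intro left_ideal_if_ideal int.genideal_ideal) simp
  moreover have "Idl\<^bsub>\<Z>\<^esub> {d} \<noteq> {0}"
    using assms(1) by (auto simp: int_Idl)
  moreover have "Idl\<^bsub>\<Z>\<^esub> {d} \<noteq> carrier \<Z>"
  proof
    assume "Idl\<^bsub>\<Z>\<^esub> {d} = carrier \<Z>"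
    then have "Idl\<^bsub>\<Z>\<^esub> {1} \<subseteq> Idl\<^bsub>\<Z>\<^esub> {d}" by (simp add: int_Idl)
    with assms(2) show False by (simp add: Idl_subset_eq_dvd)
  qed
  ultimately show ?thesis by (simp add: nontriv_left_ideals_def)
qed

lemma int_left_ideals_disjoint_chains:
  obtains g :: "nat \<times> nat \<Rightarrow> int set"
  where "inj g" "range g \<subseteq> nontriv_left_ideals \<Z>"
    "\<And>a b. a \<noteq> b \<Longrightarrow> incl_adj (g a) (g b) \<longleftrightarrow> fst a = fst b"
proof -
  obtain p :: "nat \<Rightarrow> nat" where "inj p" and p_prime: "\<And>i. prime (p i)"
    using primes_infinite unfolding infinite_iff_countable_subset by blast
  define q where "q a = int (p (fst a)) ^ Suc (snd a)" for a
  have q_dvd: "q b dvd q a \<longleftrightarrow> fst b = fst a \<and> snd b \<le> snd a" for a b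
  proof -
    have "q b dvd q a \<longleftrightarrow> int (p (fst b)) = int (p (fst a)) \<and> snd b \<le> snd a"
      unfolding q_def by (rule prime_power_dvd_prime_power_iff) (simp_all add: p_prime)
    with \<open>inj p\<close> show ?thesis by (simp add: inj_eq)
  qed
  define g where "g a = Idl\<^bsub>\<Z>\<^esub> {q a}" for a
  have g_subset: "g a \<subseteq> g b \<longleftrightarrow> fst b = fst a \<and> snd b \<le> snd a" for a b
    unfolding g_def Idl_subset_eq_dvd q_dvd ..
  show thesis
  proof
    show "inj g"
    proof (rule injI)
      fix a b assume "g a = g b"
      then have "fst a = fst b" "snd a = snd b" using g_subset[of a b] g_subset[of b a] by auto
      then show "a = b" by (simp add: prod_eq_iff)
    qed
    have prime_power: "x ^ Suc k \<noteq> 0" "\<not> is_unit (x ^ Suc k)" if "prime x" for x :: int and k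
      using that not_prime_unit[of x] unfolding is_unit_power_iff by auto
    have "prime (int (p i))" for i by (simp add: p_prime)
    then have "q a \<noteq> 0" "\<not> is_unit (q a)" for a
      unfolding q_def by (simp_all only: prime_power not_False_eq_True)
    then show "range g \<subseteq> nontriv_left_ideals \<Z>"
      by (auto simp: g_def intro: int_Idl_in_nontriv_left_ideals)
    fix a b :: "nat \<times> nat" assume "a \<noteq> b"
    with \<open>inj g\<close> have "g a \<noteq> g b" by (auto dest: injD)
    then show "incl_adj (g a) (g b) \<longleftrightarrow> fst a = fst b"
      unfolding incl_adj_def using g_subset[of a b] g_subset[of b a] by auto
  qed
qed

lemma II_ramsey_int_lower_bound:
  assumes "r \<le> M * N"
  shows "\<not> II_ramsey \<Z> (Suc N) (Suc M) r"
proof (rule int_left_ideals_disjoint_chains)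
  fix g :: "nat \<times> nat \<Rightarrow> int set"
  assume "inj g" "range g \<subseteq> nontriv_left_ideals \<Z>"
    "\<And>a b. a \<noteq> b \<Longrightarrow> incl_adj (g a) (g b) \<longleftrightarrow> fst a = fst b"
  with assms show ?thesis
    unfolding II_ramsey_def by (intro not_ramsey_prop_if_embeds_disjoint_cliques)
qed

lemma PO_ramsey_nat_lower_bound:
  assumes "r \<le> M * N"
  shows "\<exists>(A :: nat set) Le. partial_order_on A Le \<and> \<not> PO_ramsey A Le (Suc N) (Suc M) r"
proof (intro exI conjI)
  define Le where "Le = {(k, l). fst (prod_decode k) = fst (prod_decode l) \<and> snd (prod_decode k) \<le> snd (prod_decode l)}"
  have "antisym Le"
  proof (rule antisymI)
    fix k l assume "(k, l) \<in> Le" "(l, k) \<in> Le"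
    then have "prod_decode k = prod_decode l" by (simp add: Le_def prod_eq_iff)
    then show "k = l" by (rule injD[OF inj_prod_decode])
  qed
  then show "partial_order_on UNIV Le"
    unfolding partial_order_on_def preorder_on_def refl_on_def trans_def Le_def by auto
  have "po_adj Le (prod_encode a) (prod_encode b) \<longleftrightarrow> fst a = fst b" for a b
    unfolding po_adj_def Le_def by (simp add: prod_encode_inverse) arith
  with assms show "\<not> PO_ramsey UNIV Le (Suc N) (Suc M) r"
    unfolding PO_ramsey_def by (intro not_ramsey_prop_if_embeds_disjoint_cliques[OF inj_prod_encode]) auto
qed

theorem theorem3p12:
  fixes n m :: nat
  assumes "n \<ge> 1" and "m \<ge> 1"
  shows "(\<forall>R :: ('a, 'b) ring_scheme. ring R \<and> \<one>\<^bsub>R\<^esub> \<noteq> \<zero>\<^bsub>R\<^esub> \<longrightarrow>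
            II_ramsey R n m ((n - 1) * (m - 1) + 1))
       \<and> (\<forall>r < (n - 1) * (m - 1) + 1. \<exists>R :: int ring.
            ring R \<and> \<one>\<^bsub>R\<^esub> \<noteq> \<zero>\<^bsub>R\<^esub> \<and> \<not> II_ramsey R n m r)
       \<and> (\<forall>(A :: 'c set) Le. partial_order_on A Le \<longrightarrow>
            PO_ramsey A Le n m ((n - 1) * (m - 1) + 1))
       \<and> (\<forall>r < (n - 1) * (m - 1) + 1. \<exists>(A :: nat set) Le.
            partial_order_on A Le \<and> \<not> PO_ramsey A Le n m r)"
proof -
  obtain N M where n: "n = Suc N" and m: "m = Suc M"
    using assms by (cases n; cases m) auto
  have below: "r \<le> M * N" if "r < (n - 1) * (m - 1) + 1" for r
    using that by (simp add: n m mult.commute)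
  show ?thesis
  proof (intro conjI allI impI)
    show "II_ramsey R n m ((n - 1) * (m - 1) + 1)" for R :: "('a, 'b) ring_scheme"
      using assms(1) by (rule II_ramsey_upper_bound)
    show "PO_ramsey A Le n m ((n - 1) * (m - 1) + 1)" if "partial_order_on A Le" for A :: "'c set" and Le
      using that assms(1) by (rule PO_ramsey_upper_bound)
  next
    fix r assume "r < (n - 1) * (m - 1) + 1"
    then have "r \<le> M * N" by (rule below)
    then have "\<not> II_ramsey \<Z> (Suc N) (Suc M) r" by (rule II_ramsey_int_lower_bound)
    then show "\<exists>R :: int ring. ring R \<and> \<one>\<^bsub>R\<^esub> \<noteq> \<zero>\<^bsub>R\<^esub> \<and> \<not> II_ramsey R n m r"
      using int.ring_axioms n m by auto
  next
    fix r assume "r < (n - 1) * (m - 1) + 1"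
    then have "r \<le> M * N" by (rule below)
    then show "\<exists>(A :: nat set) Le. partial_order_on A Le \<and> \<not> PO_ramsey A Le n m r"
      unfolding n m by (rule PO_ramsey_nat_lower_bound)
  qed
qed

end
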